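(* Let $p$ be one of $(123,\emptyset,\{0,1,2\})$, $(123,\emptyset,\{0,1,3\})$, $(132,\emptyset,\{0,1,2\})$, $(132,\emptyset,\{0,1,3\})$, $(132,\emptyset,\{0,2,3\})$, $(132,\emptyset,\{1,2,3\})$, or any pattern in the same symmetry class as one of these. Then for all $n\ge3$, $a_n(p)=\frac56\,n!$.
   Context: For $n\ge1$, $\mathcal S_n$ is the set of permutations $\pi=\pi_1\cdots\pi_n$ of $[n]$. A bi-vincular pattern of length $k$ is a triple $p=(\sigma,X,Y)$ with $\sigma\in\mathcal S_k$ and $X,Y\subseteq\{0,1,\dots,k\}$. A permutation $\pi\in\mathcal S_n$ contains $p$ if there are indices $1\le i_1<\dots<i_k\le n$ such that $(\pi_{i_1},\dots,\pi_{i_k})$ is order-isomorphic to $\sigma$ and, letting $j_1<\dots<j_k$ be the values $\pi_{i_1},\dots,\pi_{i_k}$ sorted increasingly and setting $i_0=j_0=0$, $i_{k+1}=j_{k+1}=n+1$, one has $i_{x+1}=i_x+1$ for all $x\in X$ and $j_{y+1}=j_y+1$ for all $y\in Y$. Otherwise $\pi$ avoids $p$; $a_n(p)$ is the number of $\pi\in\mathcal S_n$ avoiding $p$. Symmetries: $p^{i}=(\sigma^{-1},Y,X)$, $p^{r}=(\sigma^{r},\{k-x:x\in X\},Y)$, $p^{c}=(\sigma^{c},X,\{k-y:y\in Y\})$ with $\sigma^r_j=\sigma_{k+1-j}$, $\sigma^c_j=k+1-\sigma_j$; the symmetry class of $p$ consists of all patterns obtained from $p$ by finitely many applications of these maps.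 *)

theory Defs
  imports Complex_Main
begin

text \<open>Permutations of [n] as lists (one-line notation); entry i (1-based) is w ! (i-1).\<close>
definition perms :: "nat \<Rightarrow> nat list set" where
  "perms n = {w. length w = n \<and> distinct w \<and> set w = {1..n}}"

type_synonym bvpat = "nat list \<times> nat set \<times> nat set"

definition is_bvpat :: "bvpat \<Rightarrow> bool" where
  "is_bvpat p = (case p of (\<sigma>, X, Y) \<Rightarrow>
     \<sigma> \<in> perms (length \<sigma>) \<and> X \<subseteq> {0..length \<sigma>} \<and> Y \<subseteq> {0..length \<sigma>})"

text \<open>Containment. ii gives the chosen positions i_1<...<i_k; the extended sequences
  with i_0 = j_0 = 0 and i_(k+1) = j_(k+1) = n+1 are ext_i and ext_j.\<close>
definition ext_i :: "nat \<Rightarrow> nat \<Rightarrow> (nat \<Rightarrow> nat) \<Rightarrow> nat \<Rightarrow> nat" where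
  "ext_i n k ii a = (if a = 0 then 0 else if a = k + 1 then n + 1 else ii a)"

definition ext_j :: "nat list \<Rightarrow> nat \<Rightarrow> (nat \<Rightarrow> nat) \<Rightarrow> nat \<Rightarrow> nat" where
  "ext_j w k ii b = (if b = 0 then 0 else if b = k + 1 then length w + 1
      else sort (map (\<lambda>a. w ! (ii a - 1)) [1..<k+1]) ! (b - 1))"

definition contains :: "nat list \<Rightarrow> bvpat \<Rightarrow> bool" where
  "contains w p = (case p of (\<sigma>, X, Y) \<Rightarrow>
     (let k = length \<sigma>; n = length w in
      \<exists>ii :: nat \<Rightarrow> nat.
        (\<forall>a\<in>{1..k}. 1 \<le> ii a \<and> ii a \<le> n) \<and>
        (\<forall>a\<in>{1..k}. \<forall>b\<in>{1..k}. a < b \<longrightarrow> ii a < ii b) \<and>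
        (\<forall>a\<in>{1..k}. \<forall>b\<in>{1..k}.
            (w ! (ii a - 1) < w ! (ii b - 1)) = (\<sigma> ! (a - 1) < \<sigma> ! (b - 1))) \<and>
        (\<forall>x\<in>X. ext_i n k ii (x + 1) = ext_i n k ii x + 1) \<and>
        (\<forall>y\<in>Y. ext_j w k ii (y + 1) = ext_j w k ii y + 1)))"

definition avoids :: "nat list \<Rightarrow> bvpat \<Rightarrow> bool" where
  "avoids w p = (\<not> contains w p)"

definition av_count :: "nat \<Rightarrow> bvpat \<Rightarrow> nat" where
  "av_count n p = card {w \<in> perms n. avoids w p}"

definition perm_inverse :: "nat list \<Rightarrow> nat list" where
  "perm_inverse \<sigma> = map (\<lambda>j. THE a. a \<in> {1..length \<sigma>} \<and> \<sigma> ! (a - 1) = j) [1..<length \<sigma> + 1]"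

definition sym_i :: "bvpat \<Rightarrow> bvpat" where
  "sym_i p = (case p of (\<sigma>, X, Y) \<Rightarrow> (perm_inverse \<sigma>, Y, X))"

definition sym_r :: "bvpat \<Rightarrow> bvpat" where
  "sym_r p = (case p of (\<sigma>, X, Y) \<Rightarrow> (rev \<sigma>, (\<lambda>x. length \<sigma> - x) ` X, Y))"

definition sym_c :: "bvpat \<Rightarrow> bvpat" where
  "sym_c p = (case p of (\<sigma>, X, Y) \<Rightarrow>
     (map (\<lambda>v. length \<sigma> + 1 - v) \<sigma>, X, (\<lambda>y. length \<sigma> - y) ` Y))"

inductive_set sym_class :: "bvpat \<Rightarrow> bvpat set" for p :: bvpat where
  base: "p \<in> sym_class p"
| inv: "q \<in> sym_class p \<Longrightarrow> sym_i q \<in> sym_class p"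
| rev: "q \<in> sym_class p \<Longrightarrow> sym_r q \<in> sym_class p"
| comp: "q \<in> sym_class p \<Longrightarrow> sym_c q \<in> sym_class p"

end

theory Submission
  imports Defs "HOL-Combinatorics.Multiset_Permutations"
begin

text \<open>
  For every pattern in these symmetry classes the underlying permutation has length 3 and one of
  X, Y is empty while the other consists of three of the four gaps 0, 1, 2, 3. Because the extended
  sequences start at 0 and end at n + 1, three forced adjacencies pin the three positions (for X)
  or the three values (for Y) of an occurrence to a fixed triple, and the symmetries i, r, c
  preserve this shape. A permutation therefore contains the pattern iff the entries at three fixed
  positions, respectively the positions of three fixed values, appear in one prescribed relative
  order. Transposing two of these entries (or values) is an involution of S_n exchanging the
  corresponding order classes; since the transpositions (1 2) and (2 3) generate S_3, all six
  classes have n!/6 elements, and the avoiders number 5/6 n!.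
\<close>

lemma atLeastAtMost_1_3: "{1..3::nat} = {1,2,3}" by auto

lemma perms_eq_permutations_of_set: "perms n = permutations_of_set {1..n}"
  unfolding perms_def permutations_of_set_def by (auto dest: distinct_card)

lemma finite_perms: "finite (perms n)"
  by (simp add: perms_eq_permutations_of_set)

lemma card_perms: "card (perms n) = fact n"
  by (simp add: perms_eq_permutations_of_set)

lemma perms_3: "perms 3 = {[1,2,3], [1,3,2], [2,1,3], [2,3,1], [3,1,2], [3,2,1]}" (is "_ = ?S")
proof
  show "?S \<subseteq> perms 3" by (auto simp: perms_def atLeastAtMost_1_3)
  show "perms 3 \<subseteq> ?S"
  proof
    fix \<tau> assume \<tau>: "\<tau> \<in> perms 3"
    then obtain x y z where \<tau>_eq: "\<tau> = [x, y, z]"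
      by (force simp: perms_def length_Suc_conv numeral_3_eq_3)
    have "set [x, y, z] = {1, 2, 3}" "distinct [x, y, z]"
      using \<tau> unfolding perms_def atLeastAtMost_1_3 \<tau>_eq by blast+
    then have "x \<in> {1,2,3}" "y \<in> {1,2,3}" "z \<in> {1,2,3}" "x \<noteq> y" "x \<noteq> z" "y \<noteq> z"
      by auto
    then show "\<tau> \<in> ?S" unfolding \<tau>_eq by (elim insertE emptyE) simp_all
  qed
qed

lemma perm_inverse_in_perms:
  assumes "\<sigma> \<in> perms k"
  shows "perm_inverse \<sigma> \<in> perms k"
proof -
  have \<sigma>: "length \<sigma> = k" "distinct \<sigma>" "set \<sigma> = {1..k}" using assms by (auto simp: perms_def)
  define f where "f j = (THE a. a \<in> {1..k} \<and> \<sigma> ! (a - 1) = j)" for j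
  have f: "f j \<in> {1..k} \<and> \<sigma> ! (f j - 1) = j" if "j \<in> {1..k}" for j
  proof -
    have "j \<in> set \<sigma>" using that \<sigma>(3) by simp
    then obtain i where i: "i < k" "\<sigma> ! i = j" by (auto simp: in_set_conv_nth \<sigma>(1))
    have "\<exists>!a. a \<in> {1..k} \<and> \<sigma> ! (a - 1) = j"
    proof (rule ex1I[of _ "i + 1"])
      show "i + 1 \<in> {1..k} \<and> \<sigma> ! (i + 1 - 1) = j" using i by simp
      fix a assume a: "a \<in> {1..k} \<and> \<sigma> ! (a - 1) = j"
      then have "a - 1 = i" using i \<sigma>(1,2) nth_eq_iff_index_eq by fastforce
      then show "a = i + 1" using a by auto
    qed
    then show ?thesis unfolding f_def by (rule theI')
  qed
  then have "inj_on f {1..k}" by (metis inj_onI)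
  moreover have "f ` {1..k} = {1..k}"
    using f \<open>inj_on f {1..k}\<close> by (intro endo_inj_surj) auto
  moreover have "perm_inverse \<sigma> = map f [1..<k+1]"
    by (simp add: perm_inverse_def f_def \<sigma>(1))
  moreover have "set [1..<k+1] = {1..k}" by auto
  ultimately show ?thesis by (simp add: perms_def distinct_map del: upt_Suc)
qed

section \<open>Patterns with three pinned entries\<close>

definition pinning_sets :: "nat set set" where
  "pinning_sets = {{0,1,2}, {0,1,3}, {0,2,3}, {1,2,3}}"

definition pinned_pattern :: "bvpat \<Rightarrow> bool" where
  "pinned_pattern q \<longleftrightarrow>
     (\<exists>\<tau> S. \<tau> \<in> perms 3 \<and> S \<in> pinning_sets \<and> (q = (\<tau>, {}, S) \<or> q = (\<tau>, S, {})))"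

lemma pinned_pattern_valuesI: "\<tau> \<in> perms 3 \<Longrightarrow> S \<in> pinning_sets \<Longrightarrow> pinned_pattern (\<tau>, {}, S)"
  and pinned_pattern_positionsI: "\<tau> \<in> perms 3 \<Longrightarrow> S \<in> pinning_sets \<Longrightarrow> pinned_pattern (\<tau>, S, {})"
  unfolding pinned_pattern_def by blast+

lemma pinned_patternE:
  assumes "pinned_pattern q"
  obtains (value_pinned) \<tau> S where "\<tau> \<in> perms 3" "S \<in> pinning_sets" "q = (\<tau>, {}, S)"
    | (position_pinned) \<tau> S where "\<tau> \<in> perms 3" "S \<in> pinning_sets" "q = (\<tau>, S, {})"
  using assms unfolding pinned_pattern_def by blast

lemma pinning_sets_reflect: "S \<in> pinning_sets \<Longrightarrow> (\<lambda>x. 3 - x) ` S \<in> pinning_sets"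
proof -
  have "(\<lambda>x::nat. 3 - x) ` {0,1,2} = {1,2,3}" "(\<lambda>x::nat. 3 - x) ` {0,1,3} = {0,2,3}"
    "(\<lambda>x::nat. 3 - x) ` {0,2,3} = {0,1,3}" "(\<lambda>x::nat. 3 - x) ` {1,2,3} = {0,1,2}"
    by auto
  then show "S \<in> pinning_sets \<Longrightarrow> ?thesis"
    unfolding pinning_sets_def by (elim insertE emptyE; hypsubst; simp only: insert_iff simp_thms)
qed

lemma pinned_pattern_sym_i: "pinned_pattern q \<Longrightarrow> pinned_pattern (sym_i q)"
  by (erule pinned_patternE)
    (simp_all add: sym_i_def perm_inverse_in_perms pinned_pattern_valuesI pinned_pattern_positionsI)

lemma pinned_pattern_sym_r: "pinned_pattern q \<Longrightarrow> pinned_pattern (sym_r q)"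
  by (erule pinned_patternE)
    (simp_all add: sym_r_def perms_def pinning_sets_reflect pinned_pattern_valuesI pinned_pattern_positionsI)

lemma pinned_pattern_sym_c:
  assumes "pinned_pattern q"
  shows "pinned_pattern (sym_c q)"
proof -
  have complement: "map (\<lambda>v. 4 - v) \<tau> \<in> perms 3" if "\<tau> \<in> perms 3" for \<tau> :: "nat list"
    using that unfolding perms_3 by (elim insertE emptyE) simp_all
  have length: "length \<tau> = 3" if "\<tau> \<in> perms 3" for \<tau> :: "nat list"
    using that by (simp add: perms_def)
  from assms show ?thesis
    by (cases rule: pinned_patternE)
      (simp_all add: sym_c_def complement length pinning_sets_reflect pinned_pattern_valuesI
        pinned_pattern_positionsI)
qed

lemma pinned_pattern_sym_class: "q \<in> sym_class p \<Longrightarrow> pinned_pattern p \<Longrightarrow> pinned_pattern q"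
  by (induction rule: sym_class.induct)
    (auto intro: pinned_pattern_sym_i pinned_pattern_sym_r pinned_pattern_sym_c)

section \<open>The six relative orders of three entries\<close>

definition orderings :: "(nat \<times> nat \<times> nat) set" where
  "orderings = {(1,2,3), (1,3,2), (2,1,3), (2,3,1), (3,1,2), (3,2,1)}"

definition increasing3 :: "(nat \<Rightarrow> 'a::linorder) \<Rightarrow> nat \<times> nat \<times> nat \<Rightarrow> bool" where
  "increasing3 x r \<longleftrightarrow> (case r of (a, b, c) \<Rightarrow> x a < x b \<and> x b < x c)"

lemma card_orderings: "card orderings = 6"
  by (simp add: orderings_def)

lemma orderings_cover:
  assumes "inj_on x {1,2,3}"
  shows "\<exists>r\<in>orderings. increasing3 x r"
proof -
  have "x 1 \<noteq> x 2" "x 1 \<noteq> x 3" "x 2 \<noteq> x 3" using assms by (auto simp: inj_on_def)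
  then show ?thesis
    by (cases "x 1 < x 2"; cases "x 2 < x 3"; cases "x 1 < x 3")
      (auto simp: orderings_def increasing3_def not_less order_le_neq_trans)
qed

lemma orderings_unique:
  "r \<in> orderings \<Longrightarrow> r' \<in> orderings \<Longrightarrow> increasing3 x r \<Longrightarrow> increasing3 x r' \<Longrightarrow> r = r'"
  unfolding orderings_def increasing3_def by auto

lemma card_class_transpose:
  fixes T :: "'w \<Rightarrow> nat \<Rightarrow> 'a::linorder"
  assumes g: "\<And>w. w \<in> P \<Longrightarrow> g w \<in> P \<and> g (g w) = w"
    and T: "\<And>w k. w \<in> P \<Longrightarrow> k \<in> {1,2,3} \<Longrightarrow> T (g w) k = T w (transpose i j k)"
    and ij: "i \<in> {1,2,3}" "j \<in> {1,2,3}" and abc: "a \<in> {1,2,3}" "b \<in> {1,2,3}" "c \<in> {1,2,3}"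
  shows "card {w \<in> P. increasing3 (T w) (a, b, c)} =
    card {w \<in> P. increasing3 (T w) (transpose i j a, transpose i j b, transpose i j c)}"
    (is "card ?A = card ?B")
proof (rule bij_betw_same_card, rule bij_betw_byWitness[where f' = g])
  have s: "transpose i j k \<in> {1,2,3}" if "k \<in> {1,2,3}" for k
    using that ij by (auto simp: transpose_def)
  show "g ` ?A \<subseteq> ?B" using g T abc s by (auto simp: increasing3_def)
  show "g ` ?B \<subseteq> ?A" using g T abc s by (auto simp: increasing3_def)
qed (use g in auto)

lemma card_increasing3_class:
  fixes T :: "'w \<Rightarrow> nat \<Rightarrow> 'a::linorder"
  assumes "finite P"
    and inj: "\<And>w. w \<in> P \<Longrightarrow> inj_on (T w) {1,2,3}"
    and g: "\<And>w. w \<in> P \<Longrightarrow> g w \<in> P \<and> g (g w) = w"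
      "\<And>w k. w \<in> P \<Longrightarrow> k \<in> {1,2,3} \<Longrightarrow> T (g w) k = T w (transpose 1 2 k)"
    and h: "\<And>w. w \<in> P \<Longrightarrow> h w \<in> P \<and> h (h w) = w"
      "\<And>w k. w \<in> P \<Longrightarrow> k \<in> {1,2,3} \<Longrightarrow> T (h w) k = T w (transpose 2 3 k)"
    and r: "r \<in> orderings"
  shows "6 * card {w \<in> P. increasing3 (T w) r} = card P"
proof -
  define C where "C r = {w \<in> P. increasing3 (T w) r}" for r
  have card_swap12: "card (C (a, b, c)) = card (C (transpose 1 2 a, transpose 1 2 b, transpose 1 2 c))"
    if "a \<in> {1,2,3}" "b \<in> {1,2,3}" "c \<in> {1,2,3}" for a b c
    unfolding C_def by (rule card_class_transpose[where g = g]) (use g that in simp_all)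
  have card_swap23: "card (C (a, b, c)) = card (C (transpose 2 3 a, transpose 2 3 b, transpose 2 3 c))"
    if "a \<in> {1,2,3}" "b \<in> {1,2,3}" "c \<in> {1,2,3}" for a b c
    unfolding C_def by (rule card_class_transpose[where g = h]) (use h that in simp_all)
  have same: "card (C r) = card (C (1, 2, 3))" if "r \<in> orderings" for r
  proof -
    have "card (C (1,3,2)) = card (C (1,2,3))" "card (C (2,1,3)) = card (C (1,2,3))"
      using card_swap12[of 1 2 3] card_swap23[of 1 2 3] by simp_all
    moreover have "card (C (2,3,1)) = card (C (1,3,2))" "card (C (3,1,2)) = card (C (2,1,3))"
      using card_swap12[of 1 3 2] card_swap23[of 2 1 3] by simp_all
    moreover have "card (C (3,2,1)) = card (C (3,1,2))"
      using card_swap12[of 3 1 2] by simp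
    ultimately show ?thesis using that by (auto simp: orderings_def)
  qed
  have "P = (\<Union>r\<in>orderings. C r)"
    using orderings_cover inj by (auto simp: C_def)
  then have "card P = card (\<Union>r\<in>orderings. C r)" by simp
  also have "\<dots> = (\<Sum>r\<in>orderings. card (C r))"
  proof (rule card_UN_disjoint)
    show "finite orderings" by (simp add: orderings_def)
    show "\<forall>r\<in>orderings. finite (C r)" using \<open>finite P\<close> by (simp add: C_def)
    show "\<forall>r\<in>orderings. \<forall>r'\<in>orderings. r \<noteq> r' \<longrightarrow> C r \<inter> C r' = {}"
      using orderings_unique by (fastforce simp: C_def)
  qed
  also have "\<dots> = 6 * card (C (1, 2, 3))"
    using same card_orderings by simp
  finally show ?thesis using same[OF r] by (simp add: C_def)
qed

definition same_order :: "(nat \<Rightarrow> 'a::linorder) \<Rightarrow> (nat \<Rightarrow> 'b::linorder) \<Rightarrow> bool" where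
  "same_order x y \<longleftrightarrow> (\<forall>a\<in>{1..3}. \<forall>b\<in>{1..3}. (x a < x b) = (y a < y b))"

lemma same_order_cong:
  "(\<And>k. k \<in> {1,2,3} \<Longrightarrow> x k = x' k) \<Longrightarrow> same_order x y \<longleftrightarrow> same_order x' y"
  unfolding same_order_def atLeastAtMost_1_3 by simp

lemma perms_3_ordering:
  assumes "\<tau> \<in> perms 3"
  shows "\<exists>(a, b, c)\<in>orderings. \<tau> ! (a - 1) = 1 \<and> \<tau> ! (b - 1) = 2 \<and> \<tau> ! (c - 1) = 3"
  using assms unfolding perms_3 orderings_def by (elim insertE emptyE) auto

lemma same_order_iff_increasing3:
  fixes x y :: "nat \<Rightarrow> nat"
  assumes r: "(a, b, c) \<in> orderings" and "inj_on x {1,2,3}" and y: "increasing3 y (a, b, c)"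
  shows "same_order x y \<longleftrightarrow> increasing3 x (a, b, c)"
proof -
  have abc: "{1..3} = {a, b, c}" using r by (auto simp: orderings_def)
  have "x a \<noteq> x b" "x a \<noteq> x c" "x b \<noteq> x c" using assms(2) r by (auto simp: inj_on_def orderings_def)
  with y show ?thesis unfolding same_order_def abc increasing3_def by auto
qed

lemma sort_increasing3:
  fixes x :: "nat \<Rightarrow> 'a::linorder"
  assumes "(a, b, c) \<in> orderings" "increasing3 x (a, b, c)"
  shows "sort [x 1, x 2, x 3] = [x a, x b, x c]"
  using assms unfolding orderings_def increasing3_def by (elim insertE emptyE) auto

lemma same_order_sort_iff:
  fixes x d :: "nat \<Rightarrow> nat"
  assumes \<tau>: "\<tau> \<in> perms 3" and x: "inj_on x {1,2,3}" and d: "d 1 < d 2" "d 2 < d 3"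
  shows "same_order x (\<lambda>k. \<tau> ! (k - 1)) \<and> sort [x 1, x 2, x 3] = [d 1, d 2, d 3] \<longleftrightarrow>
     (\<forall>k\<in>{1,2,3}. x k = d (\<tau> ! (k - 1)))"
proof -
  obtain a b c where abc: "(a, b, c) \<in> orderings" and
    \<tau>abc: "\<tau> ! (a - 1) = 1" "\<tau> ! (b - 1) = 2" "\<tau> ! (c - 1) = 3"
    using perms_3_ordering[OF \<tau>] by blast
  have "{a, b, c} = {1, 2, 3}" using abc by (auto simp: orderings_def)
  then have all: "(\<forall>k\<in>{1,2,3}. P k) \<longleftrightarrow> P a \<and> P b \<and> P c" for P by (metis insert_iff empty_iff)
  have "increasing3 (\<lambda>k. \<tau> ! (k - 1)) (a, b, c)" using \<tau>abc by (simp add: increasing3_def)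
  then have "same_order x (\<lambda>k. \<tau> ! (k - 1)) \<longleftrightarrow> increasing3 x (a, b, c)"
    by (rule same_order_iff_increasing3[OF abc x])
  moreover have "(\<forall>k\<in>{1,2,3}. x k = d (\<tau> ! (k - 1))) \<longleftrightarrow> x a = d 1 \<and> x b = d 2 \<and> x c = d 3"
    unfolding all \<tau>abc by simp
  moreover have "increasing3 x (a, b, c) \<and> sort [x 1, x 2, x 3] = [d 1, d 2, d 3] \<longleftrightarrow>
      x a = d 1 \<and> x b = d 2 \<and> x c = d 3"
  proof
    assume H: "increasing3 x (a, b, c) \<and> sort [x 1, x 2, x 3] = [d 1, d 2, d 3]"
    then have "[x a, x b, x c] = [d 1, d 2, d 3]" using sort_increasing3[OF abc] by metis
    then show "x a = d 1 \<and> x b = d 2 \<and> x c = d 3" by simp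
  next
    assume xd: "x a = d 1 \<and> x b = d 2 \<and> x c = d 3"
    then have "increasing3 x (a, b, c)" using d by (simp add: increasing3_def)
    moreover from this have "sort [x 1, x 2, x 3] = [x a, x b, x c]" by (rule sort_increasing3[OF abc])
    ultimately show "increasing3 x (a, b, c) \<and> sort [x 1, x 2, x 3] = [d 1, d 2, d 3]"
      using xd by simp
  qed
  ultimately show ?thesis by simp
qed

section \<open>Occurrences of pinned patterns\<close>

definition pins :: "nat set \<Rightarrow> nat \<Rightarrow> (nat \<Rightarrow> nat) \<Rightarrow> bool" where
  "pins S n d \<longleftrightarrow> 1 \<le> d 1 \<and> d 1 < d 2 \<and> d 2 < d 3 \<and> d 3 \<le> n \<and>
     (\<forall>E :: nat \<Rightarrow> nat. E 0 = 0 \<longrightarrow> E 4 = n + 1 \<longrightarrow>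
        (\<forall>y\<in>S. E (y + 1) = E y + 1) = (E 1 = d 1 \<and> E 2 = d 2 \<and> E 3 = d 3))"

lemma pins_exists:
  assumes "S \<in> pinning_sets" and "3 \<le> n"
  shows "\<exists>d. pins S n d"
proof -
  have "pins {0,1,2} n (\<lambda>a. a)" "pins {0,1,3} n (\<lambda>a. if a = 3 then n else a)"
    "pins {0,2,3} n (\<lambda>a. if a = 1 then 1 else n + a - 3)" "pins {1,2,3} n (\<lambda>a. n + a - 3)"
    using \<open>3 \<le> n\<close> unfolding pins_def by (auto simp: eval_nat_numeral)
  then show ?thesis using assms(1) unfolding pinning_sets_def by blast
qed

lemma pins_bounds: "pins S n d \<Longrightarrow> 1 \<le> d 1 \<and> d 1 < d 2 \<and> d 2 < d 3 \<and> d 3 \<le> n"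
  unfolding pins_def by blast

lemma pinsD:
  "pins S n d \<Longrightarrow> E 0 = 0 \<Longrightarrow> E 4 = n + 1 \<Longrightarrow>
    (\<forall>y\<in>S. E (y + 1) = E y + 1) \<longleftrightarrow> E 1 = d 1 \<and> E 2 = d 2 \<and> E 3 = d 3"
  unfolding pins_def by blast

lemma contains_length_3:
  assumes "length \<sigma> = 3"
  shows "contains w (\<sigma>, X, Y) \<longleftrightarrow> (\<exists>ii.
     (\<forall>a\<in>{1..3}. 1 \<le> ii a \<and> ii a \<le> length w) \<and> ii 1 < ii 2 \<and> ii 2 < ii 3 \<and>
     same_order (\<lambda>a. w ! (ii a - 1)) (\<lambda>a. \<sigma> ! (a - 1)) \<and>
     (\<forall>x\<in>X. ext_i (length w) 3 ii (x + 1) = ext_i (length w) 3 ii x + 1) \<and>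
     (\<forall>y\<in>Y. ext_j w 3 ii (y + 1) = ext_j w 3 ii y + 1))"
proof -
  have "(\<forall>a\<in>{1..3}. \<forall>b\<in>{1..3}. a < b \<longrightarrow> ii a < ii b) \<longleftrightarrow> ii 1 < ii 2 \<and> ii 2 < ii 3"
    for ii :: "nat \<Rightarrow> nat"
    unfolding atLeastAtMost_1_3 by auto
  then show ?thesis
    using assms by (simp add: contains_def same_order_def Let_def)
qed

lemma ext_i_pinned:
  assumes "pins X n d"
  shows "(\<forall>x\<in>X. ext_i n 3 ii (x + 1) = ext_i n 3 ii x + 1) \<longleftrightarrow> ii 1 = d 1 \<and> ii 2 = d 2 \<and> ii 3 = d 3"
  using pinsD[OF assms, of "ext_i n 3 ii"] by (simp add: ext_i_def)

lemma ext_j_pinned: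
  assumes "pins Y (length w) d"
  shows "(\<forall>y\<in>Y. ext_j w 3 ii (y + 1) = ext_j w 3 ii y + 1) \<longleftrightarrow>
    sort [w ! (ii 1 - 1), w ! (ii 2 - 1), w ! (ii 3 - 1)] = [d 1, d 2, d 3]"
proof -
  define L where "L = sort [w ! (ii 1 - 1), w ! (ii 2 - 1), w ! (ii 3 - 1)]"
  have "length L = 3" by (simp add: L_def)
  then obtain p q r where L: "L = [p, q, r]" by (force simp: length_Suc_conv numeral_3_eq_3)
  have map_eq: "map (\<lambda>a. w ! (ii a - 1)) [1..<3+1] = [w ! (ii 1 - 1), w ! (ii 2 - 1), w ! (ii 3 - 1)]"
    by (simp add: eval_nat_numeral upt_rec)
  have "ext_j w 3 ii 0 = 0" "ext_j w 3 ii 4 = length w + 1"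
    "ext_j w 3 ii 1 = p" "ext_j w 3 ii 2 = q" "ext_j w 3 ii 3 = r"
    unfolding ext_j_def map_eq L_def[symmetric] L by simp_all
  then show ?thesis
    using pinsD[OF assms, of "ext_j w 3 ii"] unfolding L_def[symmetric] L by simp
qed

lemma contains_positions_pinned:
  assumes \<tau>: "\<tau> \<in> perms 3" and X: "pins X (length w) d"
  shows "contains w (\<tau>, X, {}) \<longleftrightarrow> same_order (\<lambda>a. w ! (d a - 1)) (\<lambda>a. \<tau> ! (a - 1))"
proof -
  have "length \<tau> = 3" using \<tau> by (simp add: perms_def)
  have same: "same_order (\<lambda>a. w ! (ii a - 1)) y \<longleftrightarrow> same_order (\<lambda>a. w ! (d a - 1)) y"
    if "ii 1 = d 1 \<and> ii 2 = d 2 \<and> ii 3 = d 3" for ii and y :: "nat \<Rightarrow> nat"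
    using that by (intro same_order_cong) auto
  have d: "\<forall>a\<in>{1..3}. 1 \<le> d a \<and> d a \<le> length w" "d 1 < d 2" "d 2 < d 3"
    using pins_bounds[OF X] unfolding atLeastAtMost_1_3 by auto
  show ?thesis
    unfolding contains_length_3[OF \<open>length \<tau> = 3\<close>] ext_i_pinned[OF X]
    using same d by (intro iffI) blast+
qed

text \<open>The 0-based index of a value in a list; only meaningful for v \<in> set w.\<close>

definition position :: "'a list \<Rightarrow> 'a \<Rightarrow> nat" where
  "position w v = (THE i. i < length w \<and> w ! i = v)"

lemma position_nth: "distinct w \<Longrightarrow> i < length w \<Longrightarrow> position w (w ! i) = i"
  unfolding position_def by (rule the_equality) (auto simp: nth_eq_iff_index_eq)

lemma position_in_set:
  assumes "distinct w" "v \<in> set w"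
  shows "position w v < length w" "w ! position w v = v"
proof -
  obtain i where "i < length w" "w ! i = v" using assms(2) by (auto simp: in_set_conv_nth)
  then show "position w v < length w" "w ! position w v = v" using position_nth[OF assms(1)] by auto
qed

lemma inj_on_nth_increasing:
  fixes ii :: "nat \<Rightarrow> nat"
  assumes "distinct w" "\<forall>a\<in>{1..3}. 1 \<le> ii a \<and> ii a \<le> length w" "ii 1 < ii 2" "ii 2 < ii 3"
  shows "inj_on (\<lambda>a. w ! (ii a - 1)) {1,2,3}"
  using assms unfolding atLeastAtMost_1_3 by (auto simp: inj_on_def nth_eq_iff_index_eq)

lemma contains_values_pinned:
  assumes \<tau>: "\<tau> \<in> perms 3" and w: "w \<in> perms n" and Y: "pins Y n d"
  shows "contains w (\<tau>, {}, Y) \<longleftrightarrow> increasing3 (\<lambda>k. position w (d k)) (\<tau> ! 0, \<tau> ! 1, \<tau> ! 2)"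
proof -
  have "length \<tau> = 3" using \<tau> by (simp add: perms_def)
  have w: "length w = n" "distinct w" "set w = {1..n}" using w by (auto simp: perms_def)
  have d: "1 \<le> d 1" "d 1 < d 2" "d 2 < d 3" "d 3 \<le> n" using pins_bounds[OF Y] by auto
  have d_in_w: "d (\<tau> ! i) \<in> set w" if "i < 3" for i
  proof -
    have "\<tau> ! i \<in> {1,2,3}" using \<tau> that nth_mem[of i \<tau>] by (auto simp: perms_def atLeastAtMost_1_3)
    then show ?thesis using d w(3) by auto
  qed
  note pos = position_in_set[OF w(2) d_in_w]
  let ?x = "\<lambda>ii a. w ! (ii a - 1)"
  have pinned_values: "same_order (?x ii) (\<lambda>k. \<tau> ! (k - 1)) \<and> sort [?x ii 1, ?x ii 2, ?x ii 3] = [d 1, d 2, d 3]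
      \<longleftrightarrow> ?x ii 1 = d (\<tau> ! 0) \<and> ?x ii 2 = d (\<tau> ! 1) \<and> ?x ii 3 = d (\<tau> ! 2)"
    if "\<forall>a\<in>{1..3}. 1 \<le> ii a \<and> ii a \<le> n" "ii 1 < ii 2" "ii 2 < ii 3" for ii
    using same_order_sort_iff[OF \<tau> inj_on_nth_increasing d(2,3)] that w by simp
  show ?thesis
  proof
    assume "contains w (\<tau>, {}, Y)"
    then obtain ii where ii: "\<forall>a\<in>{1..3}. 1 \<le> ii a \<and> ii a \<le> n" "ii 1 < ii 2" "ii 2 < ii 3"
      and "same_order (?x ii) (\<lambda>k. \<tau> ! (k - 1)) \<and> sort [?x ii 1, ?x ii 2, ?x ii 3] = [d 1, d 2, d 3]"
      unfolding contains_length_3[OF \<open>length \<tau> = 3\<close>] ext_j_pinned[OF Y[folded w(1)]] w(1) by blast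
    then have "?x ii 1 = d (\<tau> ! 0)" "?x ii 2 = d (\<tau> ! 1)" "?x ii 3 = d (\<tau> ! 2)"
      using pinned_values[OF ii] by simp_all
    moreover have "ii 1 - 1 < length w" "ii 2 - 1 < length w" "ii 3 - 1 < length w"
      using ii w(1) unfolding atLeastAtMost_1_3 by auto
    ultimately have "position w (d (\<tau> ! 0)) = ii 1 - 1" "position w (d (\<tau> ! 1)) = ii 2 - 1"
      "position w (d (\<tau> ! 2)) = ii 3 - 1"
      using position_nth[OF w(2)] by metis+
    then show "increasing3 (\<lambda>k. position w (d k)) (\<tau> ! 0, \<tau> ! 1, \<tau> ! 2)"
      using ii unfolding increasing3_def atLeastAtMost_1_3 by auto
  next
    assume inc: "increasing3 (\<lambda>k. position w (d k)) (\<tau> ! 0, \<tau> ! 1, \<tau> ! 2)"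
    define ii where "ii k = position w (d (\<tau> ! (k - 1))) + 1" for k
    have ii: "\<forall>a\<in>{1..3}. 1 \<le> ii a \<and> ii a \<le> n" "ii 1 < ii 2" "ii 2 < ii 3"
      using pos(1)[of 0] pos(1)[of 1] pos(1)[of 2] inc w(1)
      unfolding ii_def increasing3_def atLeastAtMost_1_3 by auto
    have "?x ii 1 = d (\<tau> ! 0) \<and> ?x ii 2 = d (\<tau> ! 1) \<and> ?x ii 3 = d (\<tau> ! 2)"
      using pos(2)[of 0] pos(2)[of 1] pos(2)[of 2] by (simp add: ii_def)
    then show "contains w (\<tau>, {}, Y)"
      unfolding contains_length_3[OF \<open>length \<tau> = 3\<close>] ext_j_pinned[OF Y[folded w(1)]] w(1)
      using pinned_values[OF ii] ii by blast
  qed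
qed

lemma transpose_inj_on_apply:
  assumes "inj_on f A" "a \<in> A" "b \<in> A" "k \<in> A"
  shows "transpose (f a) (f b) (f k) = f (transpose a b k)"
  using assms by (auto simp: transpose_def inj_on_def)

lemma map_transpose_perms:
  assumes w: "w \<in> perms n" and uv: "u \<in> {1..n}" "v \<in> {1..n}"
  shows "map (transpose u v) w \<in> perms n"
    and "map (transpose u v) (map (transpose u v) w) = w"
    and "y \<in> {1..n} \<Longrightarrow> position (map (transpose u v) w) y = position w (transpose u v y)"
proof -
  have "distinct w" "set w = {1..n}" using w by (auto simp: perms_def)
  then show "map (transpose u v) w \<in> perms n" using w uv by (simp add: perms_def distinct_map)
  show "map (transpose u v) (map (transpose u v) w) = w" by simp
  assume "y \<in> {1..n}"
  then have "transpose u v y \<in> set w" using uv \<open>set w = {1..n}\<close> by (auto simp: transpose_def)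
  note z = position_in_set[OF \<open>distinct w\<close> this]
  have "map (transpose u v) w ! position w (transpose u v y) = y" using z by simp
  moreover have "distinct (map (transpose u v) w)" using \<open>distinct w\<close> by (simp add: distinct_map)
  ultimately show "position (map (transpose u v) w) y = position w (transpose u v y)"
    using position_nth z(1) by (metis length_map)
qed

lemma permute_list_transpose_perms:
  assumes w: "w \<in> perms n" and ij: "i < n" "j < n"
  shows "permute_list (transpose i j) w \<in> perms n"
    and "permute_list (transpose i j) (permute_list (transpose i j) w) = w"
    and "m < n \<Longrightarrow> permute_list (transpose i j) w ! m = w ! transpose i j m"
proof -
  have "length w = n" using w by (simp add: perms_def)
  then have perm: "transpose i j permutes {..<length w}" using ij by (intro permutes_swap_id) auto
  then show "permute_list (transpose i j) w \<in> perms n" using w by (simp add: perms_def)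
  show "permute_list (transpose i j) (permute_list (transpose i j) w) = w"
    using perm by (simp flip: permute_list_compose)
  show "m < n \<Longrightarrow> permute_list (transpose i j) w ! m = w ! transpose i j m"
    using perm \<open>length w = n\<close> by (simp add: permute_list_nth)
qed

lemma card_contains_values_pinned:
  assumes \<tau>: "\<tau> \<in> perms 3" and Y: "pins Y n d"
  shows "6 * card {w \<in> perms n. contains w (\<tau>, {}, Y)} = fact n"
proof -
  have d: "1 \<le> d 1" "d 1 < d 2" "d 2 < d 3" "d 3 \<le> n" using pins_bounds[OF Y] by auto
  then have d_range: "d k \<in> {1..n}" if "k \<in> {1,2,3}" for k using that by auto
  have inj_d: "inj_on d {1,2,3}" using d by (auto simp: inj_on_def)
  let ?T = "\<lambda>w k. position w (d k)"
  have T_swap: "?T (map (transpose (d a) (d b)) w) k = ?T w (transpose a b k)"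
    if "w \<in> perms n" "a \<in> {1,2,3}" "b \<in> {1,2,3}" "k \<in> {1,2,3}" for w a b k
  proof -
    have "?T (map (transpose (d a) (d b)) w) k = position w (transpose (d a) (d b) (d k))"
      using that d_range by (intro map_transpose_perms(3)) auto
    also have "transpose (d a) (d b) (d k) = d (transpose a b k)"
      using transpose_inj_on_apply[OF inj_d that(2-4)] .
    finally show ?thesis .
  qed
  have "{w \<in> perms n. contains w (\<tau>, {}, Y)} = {w \<in> perms n. increasing3 (?T w) (\<tau> ! 0, \<tau> ! 1, \<tau> ! 2)}"
    using contains_values_pinned[OF \<tau> _ Y] by (intro Collect_cong) blast
  moreover have "6 * card {w \<in> perms n. increasing3 (?T w) (\<tau> ! 0, \<tau> ! 1, \<tau> ! 2)} = card (perms n)"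
  proof (rule card_increasing3_class[where P = "perms n" and T = ?T and g = "map (transpose (d 1) (d 2))"
        and h = "map (transpose (d 2) (d 3))"])
    show "(\<tau> ! 0, \<tau> ! 1, \<tau> ! 2) \<in> orderings"
      using \<tau> unfolding perms_3 by (elim insertE emptyE) (simp_all add: orderings_def)
    fix w assume w: "w \<in> perms n"
    then have "distinct w" "set w = {1..n}" by (auto simp: perms_def)
    then have "d a = d b" if "a \<in> {1,2,3}" "b \<in> {1,2,3}" "?T w a = ?T w b" for a b
      using that d_range position_in_set(2) by metis
    then show "inj_on (?T w) {1,2,3}" using inj_d by (auto simp: inj_on_def)
    show "map (transpose (d 1) (d 2)) w \<in> perms n \<and>
        map (transpose (d 1) (d 2)) (map (transpose (d 1) (d 2)) w) = w"
      and "map (transpose (d 2) (d 3)) w \<in> perms n \<and>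
        map (transpose (d 2) (d 3)) (map (transpose (d 2) (d 3)) w) = w"
      using map_transpose_perms(1,2)[OF w d_range d_range] by simp_all
    show "?T (map (transpose (d 1) (d 2)) w) k = ?T w (transpose 1 2 k)"
      and "?T (map (transpose (d 2) (d 3)) w) k = ?T w (transpose 2 3 k)" if "k \<in> {1,2,3}" for k
      using T_swap[OF w _ _ that] by simp_all
  qed (simp add: finite_perms)
  ultimately show ?thesis by (simp add: card_perms)
qed

lemma card_contains_positions_pinned:
  assumes \<tau>: "\<tau> \<in> perms 3" and X: "pins X n d"
  shows "6 * card {w \<in> perms n. contains w (\<tau>, X, {})} = fact n"
proof -
  have d: "1 \<le> d 1" "d 1 < d 2" "d 2 < d 3" "d 3 \<le> n" using pins_bounds[OF X] by auto
  define p where "p k = d k - 1" for k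
  have p_range: "p k < n" if "k \<in> {1,2,3}" for k using that d by (auto simp: p_def)
  have inj_p: "inj_on p {1,2,3}" using d by (auto simp: inj_on_def p_def)
  let ?T = "\<lambda>w k. w ! p k"
  obtain a b c where abc: "(a, b, c) \<in> orderings" and
    \<tau>abc: "\<tau> ! (a - 1) = 1" "\<tau> ! (b - 1) = 2" "\<tau> ! (c - 1) = 3"
    using perms_3_ordering[OF \<tau>] by blast
  have inj_T: "inj_on (?T w) {1,2,3}" if "w \<in> perms n" for w
    using that p_range inj_p by (auto simp: perms_def inj_on_def nth_eq_iff_index_eq)
  have T_swap: "?T (permute_list (transpose (p i) (p j)) w) k = ?T w (transpose i j k)"
    if "w \<in> perms n" "i \<in> {1,2,3}" "j \<in> {1,2,3}" "k \<in> {1,2,3}" for w i j k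
  proof -
    have "?T (permute_list (transpose (p i) (p j)) w) k = w ! transpose (p i) (p j) (p k)"
      using that p_range by (simp add: permute_list_transpose_perms(3))
    also have "transpose (p i) (p j) (p k) = p (transpose i j k)"
      using transpose_inj_on_apply[OF inj_p that(2-4)] .
    finally show ?thesis .
  qed
  have "{w \<in> perms n. contains w (\<tau>, X, {})} = {w \<in> perms n. increasing3 (?T w) (a, b, c)}"
  proof (intro Collect_cong conj_cong refl)
    fix w assume w: "w \<in> perms n"
    then have "length w = n" by (simp add: perms_def)
    have "increasing3 (\<lambda>k. \<tau> ! (k - 1)) (a, b, c)" using \<tau>abc by (simp add: increasing3_def)
    then have "same_order (?T w) (\<lambda>k. \<tau> ! (k - 1)) \<longleftrightarrow> increasing3 (?T w) (a, b, c)"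
      by (rule same_order_iff_increasing3[OF abc inj_T[OF w]])
    then show "contains w (\<tau>, X, {}) \<longleftrightarrow> increasing3 (?T w) (a, b, c)"
      using contains_positions_pinned[OF \<tau> X[folded \<open>length w = n\<close>]] by (simp add: p_def)
  qed
  moreover have "6 * card {w \<in> perms n. increasing3 (?T w) (a, b, c)} = card (perms n)"
  proof (rule card_increasing3_class[where P = "perms n" and T = ?T
        and g = "permute_list (transpose (p 1) (p 2))" and h = "permute_list (transpose (p 2) (p 3))"])
    fix w assume w: "w \<in> perms n"
    show "permute_list (transpose (p 1) (p 2)) w \<in> perms n \<and>
        permute_list (transpose (p 1) (p 2)) (permute_list (transpose (p 1) (p 2)) w) = w"
      and "permute_list (transpose (p 2) (p 3)) w \<in> perms n \<and>
        permute_list (transpose (p 2) (p 3)) (permute_list (transpose (p 2) (p 3)) w) = w"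
      using permute_list_transpose_perms(1,2)[OF w p_range p_range] by simp_all
    show "?T (permute_list (transpose (p 1) (p 2)) w) k = ?T w (transpose 1 2 k)"
      and "?T (permute_list (transpose (p 2) (p 3)) w) k = ?T w (transpose 2 3 k)" if "k \<in> {1,2,3}" for k
      using T_swap[OF w _ _ that] by simp_all
  qed (use abc inj_T in \<open>simp_all add: finite_perms\<close>)
  ultimately show ?thesis by (simp add: card_perms)
qed

lemma card_contains_pinned:
  assumes "pinned_pattern p" "3 \<le> n"
  shows "6 * card {w \<in> perms n. contains w p} = fact n"
  using assms(1)
proof (cases rule: pinned_patternE)
  case (value_pinned \<tau> S)
  then obtain d where "pins S n d" using pins_exists assms(2) by blast
  then show ?thesis using value_pinned card_contains_values_pinned by simp
next
  case (position_pinned \<tau> S)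
  then obtain d where "pins S n d" using pins_exists assms(2) by blast
  then show ?thesis using position_pinned card_contains_positions_pinned by simp
qed

theorem mainTheorem15:
  fixes p :: bvpat and n :: nat
  assumes "p \<in> sym_class ([1,2,3], {}, {0,1,2}) \<or> p \<in> sym_class ([1,2,3], {}, {0,1,3}) \<or>
           p \<in> sym_class ([1,3,2], {}, {0,1,2}) \<or> p \<in> sym_class ([1,3,2], {}, {0,1,3}) \<or>
           p \<in> sym_class ([1,3,2], {}, {0,2,3}) \<or> p \<in> sym_class ([1,3,2], {}, {1,2,3})"
    and "n \<ge> 3"
  shows "real (av_count n p) = 5 / 6 * fact n"
proof -
  have base: "pinned_pattern (\<sigma>, {}, S)"
    if "\<sigma> \<in> {[1,2,3], [1,3,2]}" "S \<in> {{0,1,2}, {0,1,3}, {0,2,3}, {1,2,3}}" for \<sigma> S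
    using that unfolding pinning_sets_def[symmetric] by (intro pinned_pattern_valuesI) (auto simp: perms_3)
  have "pinned_pattern p"
    using assms(1) by (elim disjE) (erule pinned_pattern_sym_class, rule base, simp, (intro insertI1 insertI2)+)+
  then have contains: "6 * card {w \<in> perms n. contains w p} = fact n"
    using card_contains_pinned assms(2) by blast
  define c where "c = card {w \<in> perms n. contains w p}"
  have "{w \<in> perms n. avoids w p} = perms n - {w \<in> perms n. contains w p}"
    by (auto simp: avoids_def)
  then have "av_count n p = fact n - c"
    by (simp add: av_count_def c_def card_Diff_subset finite_perms card_perms)
  moreover have "c \<le> fact n" using contains by (simp add: c_def)
  ultimately have "real (av_count n p) = real (fact n) - real c" by simp
  also have "\<dots> = 5 / 6 * real (fact n)"
    using arg_cong[OF contains, of real] by (simp add: c_def)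
  finally show ?thesis by (simp only: of_nat_fact)
qed

end
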